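(* Let $k\ge 1$. (i) For any $i\in\{1,\dots,k\}$, if a language $L$ is recognized by some $\mathrm{rtDVA}(k)^i_1$, then $L$ is recognized by some $\mathrm{rtDVA}(k)$. (ii) For any $c\in\mathbb{Q}$, if a language $L$ is recognized by some $\mathrm{rtDVA}(k)^1_c$, then $L$ is recognized by some $\mathrm{rtDVA}(k+1)$.
   Context: A real-time deterministic vector automaton of dimension $k$ ($\mathrm{rtDVA}(k)$) is a 6-tuple $\mathcal{V}=(Q,\Sigma,\delta,q_0,Q_a,v)$ where $Q$ is a finite set of states, $q_0\in Q$ the initial state, $Q_a\subseteq Q$ the accept states, $\Sigma$ the input alphabet, $v\in\mathbb{Q}^k$ an initial row vector (freely chosen by the designer), and $\delta:Q\times(\Sigma\cup\{\cent,\$\})\times\{=,\neq\}\to Q\times S$, where $S$ is the set of $k\times k$ rational matrices. On input $w$, the machine reads $\cent w\$$ from left to right, one symbol per step, starting in $q_0$ with vector $v$. If it is in state $q$, reads symbol $\sigma$, and $\omega$ is "$=$" iff the first entry of the current vector equals $1$ (and "$\neq$" otherwise), and $\delta(q,\sigma,\omega)=(q',M)$, it moves to $q'$ and replaces the current row vector $x$ by $xM$. The input is accepted iff after processing $\$$ the state is in $Q_a$ and the first entry of the vector equals $1$. For $i\in\{1,\dots,k\}$ and $c\in\mathbb{Q}$, an $\mathrm{rtDVA}(k)^i_c$ is defined identically except that every test (both the value $\omega$ used in transitions and the final acceptance test) checks whether the $i$-th entry of the vector equals $c$ instead of whether the first entry equals $1$. *)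

theory Defs
  imports Complex_Main
begin

datatype 'a tsym = Cent | Dollar | Letter 'a

text \<open>States are natural numbers drawn from a
finite set; vectors of dimension k are functions nat => rat whose meaningful entries are
indices 0..k-1 (paper index j corresponds to index j-1 here); k x k matrices are
functions nat => nat => rat (only entries with indices < k matter).
The boolean argument of delta is the outcome of the test (True means "=").\<close>
record 'a rtdva =
  states :: "nat set"
  init :: nat
  acc :: "nat set"
  ivec :: "nat \<Rightarrow> rat"
  delta :: "nat \<Rightarrow> 'a tsym \<Rightarrow> bool \<Rightarrow> nat \<times> (nat \<Rightarrow> nat \<Rightarrow> rat)"

definition wf_rtdva :: "nat \<Rightarrow> 'a rtdva \<Rightarrow> bool" where
  "wf_rtdva k A \<longleftrightarrow> finite (states A) \<and> init A \<in> states A \<and> acc A \<subseteq> states A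
     \<and> (\<forall>j\<ge>k. ivec A j = 0)
     \<and> (\<forall>q\<in>states A. \<forall>s b. fst (delta A q s b) \<in> states A)"

definition vecmat :: "nat \<Rightarrow> (nat \<Rightarrow> rat) \<Rightarrow> (nat \<Rightarrow> nat \<Rightarrow> rat) \<Rightarrow> nat \<Rightarrow> rat" where
  "vecmat k x M = (\<lambda>j. if j < k then (\<Sum>l<k. x l * M l j) else 0)"

text \<open>Run in dimension k with the test "i-th entry (1-based) equals c".\<close>
fun run :: "nat \<Rightarrow> nat \<Rightarrow> rat \<Rightarrow> 'a rtdva \<Rightarrow> nat \<Rightarrow> (nat \<Rightarrow> rat) \<Rightarrow> 'a tsym list
             \<Rightarrow> nat \<times> (nat \<Rightarrow> rat)" where
  "run k i c A q x [] = (q, x)"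
| "run k i c A q x (s # ss) =
     (let (q', M) = delta A q s (x (i - 1) = c) in run k i c A q' (vecmat k x M) ss)"

definition lang :: "nat \<Rightarrow> nat \<Rightarrow> rat \<Rightarrow> 'a rtdva \<Rightarrow> 'a list set" where
  "lang k i c A = {w. let (q, x) = run k i c A (init A) (ivec A) (Cent # map Letter w @ [Dollar])
                      in q \<in> acc A \<and> x (i - 1) = c}"

abbreviation lang_std :: "nat \<Rightarrow> 'a rtdva \<Rightarrow> 'a list set" where
  "lang_std k A \<equiv> lang k 1 1 A"

end

theory Submission
  imports Defs "HOL-Combinatorics.Permutations"
begin

(* Both parts are simulations by a change of coordinates y = f x that intertwines the
   transitions, f (x M) = f x T(M), and turns the original test into "first entry = 1".
   For (i), f swaps entries 1 and i.  For (ii), f x = (x + (1 - c) e_1, 1) is affine; the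
   extra coordinate, constantly 1, makes it linear, and the block matrix
   [[M, 0], [u - u M, 1]] maps (x + u, 1) to (x M + u, 1). *)

definition map_rtdva ::
  "((nat \<Rightarrow> rat) \<Rightarrow> nat \<Rightarrow> rat) \<Rightarrow> ((nat \<Rightarrow> nat \<Rightarrow> rat) \<Rightarrow> nat \<Rightarrow> nat \<Rightarrow> rat) \<Rightarrow> 'a rtdva \<Rightarrow> 'a rtdva"
  where "map_rtdva f T A =
    A\<lparr>ivec := f (ivec A), delta := (\<lambda>q s b. apsnd T (delta A q s b))\<rparr>"

lemma wf_map_rtdva:
  assumes "wf_rtdva k A" and "\<forall>j\<ge>k'. f (ivec A) j = 0"
  shows "wf_rtdva k' (map_rtdva f T A)"
  using assms by (auto simp: wf_rtdva_def map_rtdva_def)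

lemma run_map_rtdva:
  assumes test: "\<And>x. f x (i' - 1) = c' \<longleftrightarrow> x (i - 1) = c"
    and intertwine: "\<And>x M. vecmat k' (f x) (T M) = f (vecmat k x M)"
  shows "run k' i' c' (map_rtdva f T A) q (f x) w = apsnd f (run k i c A q x w)"
proof (induction w arbitrary: q x)
  case Nil
  show ?case by simp
next
  case (Cons s w)
  obtain q' M where step: "delta A q s (x (i - 1) = c) = (q', M)"
    by fastforce
  then have "delta (map_rtdva f T A) q s (f x (i' - 1) = c') = (q', T M)"
    using test[of x] by (simp add: map_rtdva_def)
  with step show ?case
    by (simp add: intertwine Cons[symmetric])
qed

lemma lang_map_rtdva:
  assumes test: "\<And>x. f x (i' - 1) = c' \<longleftrightarrow> x (i - 1) = c"
    and intertwine: "\<And>x M. vecmat k' (f x) (T M) = f (vecmat k x M)"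
  shows "lang k' i' c' (map_rtdva f T A) = lang k i c A"
proof -
  have fields: "init (map_rtdva f T A) = init A" "acc (map_rtdva f T A) = acc A"
    "ivec (map_rtdva f T A) = f (ivec A)"
    by (simp_all add: map_rtdva_def)
  show ?thesis
    unfolding lang_def Let_def fields run_map_rtdva[OF test intertwine]
    by (simp add: case_prod_beta test[simplified] del: run.simps)
qed

definition permute_matrix :: "(nat \<Rightarrow> nat) \<Rightarrow> (nat \<Rightarrow> nat \<Rightarrow> rat) \<Rightarrow> nat \<Rightarrow> nat \<Rightarrow> rat" where
  "permute_matrix \<sigma> M = (\<lambda>l j. M (\<sigma> l) (\<sigma> j))"

lemma vecmat_permute:
  assumes \<sigma>: "\<sigma> permutes {..<k}"
  shows "vecmat k (x \<circ> \<sigma>) (permute_matrix \<sigma> M) = vecmat k x M \<circ> \<sigma>"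
proof
  fix j
  show "vecmat k (x \<circ> \<sigma>) (permute_matrix \<sigma> M) j = (vecmat k x M \<circ> \<sigma>) j"
  proof (cases "j < k")
    case True
    have "(\<Sum>l<k. x (\<sigma> l) * M (\<sigma> l) (\<sigma> j)) = (\<Sum>l<k. x l * M l (\<sigma> j))"
      using sum.permute[OF \<sigma>, of "\<lambda>l. x l * M l (\<sigma> j)"] by simp
    moreover have "\<sigma> j < k"
      using permutes_in_image[OF \<sigma>] True by simp
    ultimately show ?thesis
      using True by (simp add: vecmat_def permute_matrix_def)
  next
    case False
    then show ?thesis
      using permutes_not_in[OF \<sigma>, of j] by (simp add: vecmat_def)
  qed
qed

lemma lang_std_of_entry_test:
  assumes "wf_rtdva k A" and "i \<in> {1..k}"
  shows "\<exists>B. wf_rtdva k B \<and> lang_std k B = lang k i 1 A"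
proof -
  define \<sigma> where "\<sigma> = transpose 0 (i - 1)"
  have \<sigma>: "\<sigma> permutes {..<k}"
    unfolding \<sigma>_def using assms(2) by (intro permutes_swap_id) auto
  let ?B = "map_rtdva (\<lambda>x. x \<circ> \<sigma>) (permute_matrix \<sigma>) A"
  have "wf_rtdva k ?B"
    using assms(1) permutes_not_in[OF \<sigma>]
    by (intro wf_map_rtdva) (auto simp: wf_rtdva_def)
  moreover have "lang_std k ?B = lang k i 1 A"
  proof (rule lang_map_rtdva)
    show "(x \<circ> \<sigma>) (1 - 1) = 1 \<longleftrightarrow> x (i - 1) = 1" for x :: "nat \<Rightarrow> rat"
      by (simp add: \<sigma>_def)
  qed (rule vecmat_permute[OF \<sigma>])
  ultimately show ?thesis by blast
qed

definition affine_embed :: "nat \<Rightarrow> (nat \<Rightarrow> rat) \<Rightarrow> (nat \<Rightarrow> rat) \<Rightarrow> nat \<Rightarrow> rat" where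
  "affine_embed k u x = (\<lambda>j. if j < k then x j + u j else if j = k then 1 else 0)"

definition affine_matrix :: "nat \<Rightarrow> (nat \<Rightarrow> rat) \<Rightarrow> (nat \<Rightarrow> nat \<Rightarrow> rat) \<Rightarrow> nat \<Rightarrow> nat \<Rightarrow> rat" where
  "affine_matrix k u M = (\<lambda>l j.
     if l < k \<and> j < k then M l j
     else if l = k then (if j < k then u j - (\<Sum>m<k. u m * M m j) else if j = k then 1 else 0)
     else 0)"

lemma vecmat_affine_embed:
  "vecmat (Suc k) (affine_embed k u x) (affine_matrix k u M) = affine_embed k u (vecmat k x M)"
proof
  fix j
  show "vecmat (Suc k) (affine_embed k u x) (affine_matrix k u M) j
        = affine_embed k u (vecmat k x M) j"
  proof (cases "j < k")
    case True
    have "(\<Sum>l<Suc k. affine_embed k u x l * affine_matrix k u M l j)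
          = (\<Sum>l<k. (x l + u l) * M l j) + (u j - (\<Sum>l<k. u l * M l j))"
      using True by (simp add: affine_embed_def affine_matrix_def)
    also have "\<dots> = (\<Sum>l<k. x l * M l j) + u j"
      by (simp add: distrib_right sum.distrib)
    finally show ?thesis
      using True by (simp add: vecmat_def affine_embed_def)
  qed (simp add: vecmat_def affine_embed_def affine_matrix_def)
qed

lemma lang_std_of_const_test:
  assumes "wf_rtdva k A" and "k \<ge> 1"
  shows "\<exists>B. wf_rtdva (k + 1) B \<and> lang_std (k + 1) B = lang k 1 c A"
proof -
  define u :: "nat \<Rightarrow> rat" where "u = (\<lambda>j. if j = 0 then 1 - c else 0)"
  let ?B = "map_rtdva (affine_embed k u) (affine_matrix k u) A"
  have "wf_rtdva (k + 1) ?B"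
    using assms(1) by (intro wf_map_rtdva) (auto simp: affine_embed_def)
  moreover have "lang_std (k + 1) ?B = lang k 1 c A"
  proof (rule lang_map_rtdva)
    show "affine_embed k u x (1 - 1) = 1 \<longleftrightarrow> x (1 - 1) = c" for x
      using assms(2) by (simp add: affine_embed_def u_def)
  qed (rule vecmat_affine_embed[unfolded Suc_eq_plus1])
  ultimately show ?thesis by blast
qed

theorem theorem1:
  fixes k :: nat and L :: "'a::finite list set"
  assumes "k \<ge> 1"
  shows "(\<forall>i\<in>{1..k}. (\<exists>A::'a rtdva. wf_rtdva k A \<and> lang k i 1 A = L)
            \<longrightarrow> (\<exists>B::'a rtdva. wf_rtdva k B \<and> lang_std k B = L))
       \<and> (\<forall>c::rat. (\<exists>A::'a rtdva. wf_rtdva k A \<and> lang k 1 c A = L)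
            \<longrightarrow> (\<exists>B::'a rtdva. wf_rtdva (k + 1) B \<and> lang_std (k + 1) B = L))"
  using lang_std_of_entry_test lang_std_of_const_test[OF _ assms] by metis

end
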